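(* Let $\{(\phi^n,\mu^n,R^n)\}$ be generated by Scheme 1A and set $M:=R^0=\sqrt{E[\phi_{in}]}$. Then for all $n\ge 0$: $0<R^{n+1}\le R^n\le M$, and $0<\xi^{n+1}\le \frac{M}{\sqrt{c_0}}$.
   Context: Standing setup: $\Omega\subset\mathbb{R}^d$ ($d=2,3$) is a bounded domain with smooth boundary and outward unit normal $\mathbf{n}$; $\|\cdot\|_0$ is the $L^2(\Omega)$ norm. Let $\lambda\ge 0$, $H(s)=\frac14(s^2-1)^2$, $h(s)=s^3-s$. Fix $c_0>0$ and define $E[\phi]=\int_\Omega\big(\tfrac12|\nabla\phi|^2+\tfrac{\lambda}{2}\phi^2+H(\phi)\big)dx+c_0$ (so $E[\phi]\ge c_0$). Time step $\Delta t>0$. Set $\phi^0=\phi_{in}$, $\mu^0=-\Delta\phi^0+\lambda\phi^0+h(\phi^0)$, $R^0=\sqrt{E[\phi^0]}$. Scheme 1A: for $n\ge0$, $\frac{\phi^{n+1}-\phi^n}{\Delta t}=\Delta\mu^{n+1}$, $\mu^{n+1}=-\Delta\phi^{n+1}+\lambda\phi^{n+1}+|\xi^{n+1}|^2h(\phi^n)$, $\frac{R^{n+1}-R^n}{\Delta t}=-\frac{\xi^{n+1}}{2\sqrt{E[\phi^n]}}\int_\Omega|\nabla\mu^n|^2dx$, with $\xi^{n+1}=R^{n+1}/\sqrt{E[\phi^n]}$, and $\nabla\phi^{n+1}\cdot\mathbf{n}=\nabla\mu^{n+1}\cdot\mathbf{n}=0$ on $\partial\Omega$. *)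

theory Defs
  imports "HOL-Analysis.Analysis"
begin

definition partial_deriv :: "'a::euclidean_space \<Rightarrow> ('a \<Rightarrow> real) \<Rightarrow> 'a \<Rightarrow> real" where
  "partial_deriv i f = (\<lambda>x. frechet_derivative f (at x) i)"

definition grad :: "('a::euclidean_space \<Rightarrow> real) \<Rightarrow> 'a \<Rightarrow> 'a" where
  "grad f x = (\<Sum>i\<in>Basis. partial_deriv i f x *\<^sub>R i)"

definition lap :: "('a::euclidean_space \<Rightarrow> real) \<Rightarrow> 'a \<Rightarrow> real" where
  "lap f x = (\<Sum>i\<in>Basis. partial_deriv i (partial_deriv i f) x)"

primrec Ck_on :: "nat \<Rightarrow> 'a::euclidean_space set \<Rightarrow> ('a \<Rightarrow> real) \<Rightarrow> bool" where
  "Ck_on 0 U f = continuous_on U f"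
| "Ck_on (Suc k) U f = ((\<forall>x\<in>U. f differentiable (at x)) \<and> continuous_on U f \<and>
                        (\<forall>i\<in>Basis. Ck_on k U (partial_deriv i f)))"

definition smooth_on :: "'a::euclidean_space set \<Rightarrow> ('a \<Rightarrow> real) \<Rightarrow> bool" where
  "smooth_on U f = (\<forall>k. Ck_on k U f)"

definition local_defining_fun :: "'a::euclidean_space set \<Rightarrow> 'a \<Rightarrow> 'a set \<Rightarrow> ('a \<Rightarrow> real) \<Rightarrow> bool" where
  "local_defining_fun \<Omega> x U g = (open U \<and> x \<in> U \<and> smooth_on U g \<and>
      (\<forall>y\<in>U. grad g y \<noteq> 0) \<and> \<Omega> \<inter> U = {y\<in>U. g y < 0})"

definition smooth_boundary :: "'a::euclidean_space set \<Rightarrow> bool" where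
  "smooth_boundary \<Omega> = (\<forall>x\<in>frontier \<Omega>. \<exists>U g. local_defining_fun \<Omega> x U g)"

definition bounded_smooth_domain :: "'a::euclidean_space set \<Rightarrow> bool" where
  "bounded_smooth_domain \<Omega> = (open \<Omega> \<and> connected \<Omega> \<and> \<Omega> \<noteq> {} \<and> bounded \<Omega> \<and> smooth_boundary \<Omega>)"

definition outward_normal :: "'a::euclidean_space set \<Rightarrow> 'a \<Rightarrow> 'a" where
  "outward_normal \<Omega> x = (let (U, g) = (SOME (U, g). local_defining_fun \<Omega> x U g)
                          in (1 / norm (grad g x)) *\<^sub>R grad g x)"

definition neumann_bc :: "'a::euclidean_space set \<Rightarrow> ('a \<Rightarrow> real) \<Rightarrow> bool" where
  "neumann_bc \<Omega> f = (\<forall>x\<in>frontier \<Omega>. grad f x \<bullet> outward_normal \<Omega> x = 0)"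

definition Hpot :: "real \<Rightarrow> real" where "Hpot s = (s\<^sup>2 - 1)\<^sup>2 / 4"
definition hpot :: "real \<Rightarrow> real" where "hpot s = s ^ 3 - s"

definition energy :: "'a::euclidean_space set \<Rightarrow> real \<Rightarrow> real \<Rightarrow> ('a \<Rightarrow> real) \<Rightarrow> real" where
  "energy \<Omega> lam c0 \<phi> =
     (LINT x:\<Omega>|lebesgue. (norm (grad \<phi> x))\<^sup>2 / 2 + lam / 2 * (\<phi> x)\<^sup>2 + Hpot (\<phi> x)) + c0"

text \<open>Sequence (phi n, mu n, R n) generated by Scheme 1A; xi (n+1) is the auxiliary ratio.
  U is an open neighbourhood of the closure of \<Omega> on which iterates are classical (C^2).\<close>
definition scheme_1A ::
  "'a::euclidean_space set \<Rightarrow> 'a set \<Rightarrow> real \<Rightarrow> real \<Rightarrow> real \<Rightarrow> ('a \<Rightarrow> real) \<Rightarrow>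
   (nat \<Rightarrow> 'a \<Rightarrow> real) \<Rightarrow> (nat \<Rightarrow> 'a \<Rightarrow> real) \<Rightarrow> (nat \<Rightarrow> real) \<Rightarrow> (nat \<Rightarrow> real) \<Rightarrow> bool" where
  "scheme_1A \<Omega> U lam c0 dt \<phi>in \<phi> \<mu> R \<xi> =
    ((\<forall>n. Ck_on 2 U (\<phi> n) \<and> Ck_on 2 U (\<mu> n)) \<and>
     \<phi> 0 = \<phi>in \<and>
     (\<forall>x\<in>\<Omega>. \<mu> 0 x = - lap (\<phi> 0) x + lam * \<phi> 0 x + hpot (\<phi> 0 x)) \<and>
     R 0 = sqrt (energy \<Omega> lam c0 (\<phi> 0)) \<and>
     (\<forall>n. \<xi> (Suc n) = R (Suc n) / sqrt (energy \<Omega> lam c0 (\<phi> n))) \<and>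
     (\<forall>n. \<forall>x\<in>\<Omega>. (\<phi> (Suc n) x - \<phi> n x) / dt = lap (\<mu> (Suc n)) x) \<and>
     (\<forall>n. \<forall>x\<in>\<Omega>. \<mu> (Suc n) x = - lap (\<phi> (Suc n)) x + lam * \<phi> (Suc n) x
                              + \<bar>\<xi> (Suc n)\<bar>\<^sup>2 * hpot (\<phi> n x)) \<and>
     (\<forall>n. (R (Suc n) - R n) / dt =
           - (\<xi> (Suc n) / (2 * sqrt (energy \<Omega> lam c0 (\<phi> n))))
             * (LINT x:\<Omega>|lebesgue. (norm (grad (\<mu> n) x))\<^sup>2)) \<and>
     (\<forall>n. neumann_bc \<Omega> (\<phi> (Suc n)) \<and> neumann_bc \<Omega> (\<mu> (Suc n))))"

end

theory Submission
  imports Defs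
begin

text \<open>The scalar auxiliary variable update is linearly implicit in \<open>R\<^sup>n\<^sup>+\<^sup>1\<close>: substituting
  \<open>\<xi>\<^sup>n\<^sup>+\<^sup>1 = R\<^sup>n\<^sup>+\<^sup>1 / \<surd>E[\<phi>\<^sup>n]\<close> gives \<open>R\<^sup>n\<^sup>+\<^sup>1 (1 + \<Delta>t \<parallel>\<nabla>\<mu>\<^sup>n\<parallel>\<^sup>2 / (2 E[\<phi>\<^sup>n])) = R\<^sup>n\<close>.
  The factor is at least 1 because the energy and the dissipation are nonnegative, so
  \<open>R\<^sup>n\<close> stays positive and decreases, and \<open>\<xi>\<^sup>n\<^sup>+\<^sup>1 \<le> R\<^sup>0 / \<surd>c\<^sub>0\<close> since \<open>E[\<phi>\<^sup>n] \<ge> c\<^sub>0\<close>.\<close>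

lemma set_integral_nonneg:
  fixes f :: "'a \<Rightarrow> real"
  assumes "\<And>x. 0 \<le> f x"
  shows "0 \<le> (LINT x:S|M. f x)"
  unfolding set_lebesgue_integral_def
  by (intro integral_nonneg_AE AE_I2) (simp add: assms indicator_def)

lemma energy_ge_offset:
  assumes "lam \<ge> 0"
  shows "c0 \<le> energy \<Omega> lam c0 \<phi>"
proof -
  have "0 \<le> (LINT x:\<Omega>|lebesgue. (norm (grad \<phi> x))\<^sup>2 / 2 + lam / 2 * (\<phi> x)\<^sup>2 + Hpot (\<phi> x))"
    by (rule set_integral_nonneg) (simp add: Hpot_def assms)
  then show ?thesis unfolding energy_def by simp
qed

lemma sav_update_solution:
  fixes E I dt R R' :: real
  assumes "E > 0" and "dt > 0"
    and "(R' - R) / dt = - (R' / sqrt E / (2 * sqrt E)) * I"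
  shows "R' * (1 + dt * I / (2 * E)) = R"
proof -
  have "sqrt E * sqrt E = E" using \<open>E > 0\<close> by simp
  moreover have "R' - R = - dt * (R' / (2 * (sqrt E * sqrt E))) * I"
    using assms by (simp add: field_simps del: real_sqrt_mult_self)
  ultimately show ?thesis using \<open>E > 0\<close> by (simp add: field_simps)
qed

lemma sav_update_pos_decreasing:
  fixes E I dt R R' :: real
  assumes "E > 0" and "dt > 0" and "I \<ge> 0" and "R > 0"
    and "(R' - R) / dt = - (R' / sqrt E / (2 * sqrt E)) * I"
  shows "0 < R'" and "R' \<le> R"
proof -
  define q where "q = 1 + dt * I / (2 * E)"
  have "q \<ge> 1" unfolding q_def using assms(1-3) by simp
  moreover have "R' = R / q"
    using sav_update_solution[OF assms(1,2,5)] \<open>q \<ge> 1\<close> unfolding q_def[symmetric]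
    by (simp add: field_simps)
  ultimately show "0 < R'" "R' \<le> R" using \<open>R > 0\<close> by (simp_all add: divide_le_eq)
qed

lemma pos_decreasing_seq:
  fixes R :: "nat \<Rightarrow> real"
  assumes "0 < R 0" and "\<And>n. 0 < R n \<Longrightarrow> 0 < R (Suc n) \<and> R (Suc n) \<le> R n"
  shows "0 < R n \<and> R n \<le> R 0"
  by (induction n) (use assms in fastforce)+

theorem mainTheorem2:
  fixes \<Omega> U :: "'a::euclidean_space set"
    and lam c0 dt :: real
    and \<phi>in :: "'a \<Rightarrow> real"
    and \<phi> \<mu> :: "nat \<Rightarrow> 'a \<Rightarrow> real"
    and R \<xi> :: "nat \<Rightarrow> real"
  assumes "DIM('a) = 2 \<or> DIM('a) = 3"
    and "bounded_smooth_domain \<Omega>"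
    and "open U" and "closure \<Omega> \<subseteq> U"
    and "lam \<ge> 0" and "c0 > 0" and "dt > 0"
    and "scheme_1A \<Omega> U lam c0 dt \<phi>in \<phi> \<mu> R \<xi>"
  shows "\<forall>n. 0 < R (Suc n) \<and> R (Suc n) \<le> R n \<and> R n \<le> R 0 \<and>
             0 < \<xi> (Suc n) \<and> \<xi> (Suc n) \<le> R 0 / sqrt c0"
proof -
  define E where "E n = energy \<Omega> lam c0 (\<phi> n)" for n
  define I where "I n = (LINT x:\<Omega>|lebesgue. (norm (grad (\<mu> n) x))\<^sup>2)" for n
  have E_ge: "c0 \<le> E n" for n unfolding E_def using energy_ge_offset \<open>lam \<ge> 0\<close> by blast
  have I_nonneg: "0 \<le> I n" for n unfolding I_def by (rule set_integral_nonneg) simp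
  have R0: "R 0 = sqrt (E 0)" and xi: "\<And>n. \<xi> (Suc n) = R (Suc n) / sqrt (E n)"
    and update: "\<And>n. (R (Suc n) - R n) / dt = - (R (Suc n) / sqrt (E n) / (2 * sqrt (E n))) * I n"
    using assms(8) unfolding scheme_1A_def E_def I_def by auto
  have E_pos: "0 < E n" for n using E_ge[of n] \<open>c0 > 0\<close> by linarith
  have step: "0 < R n \<Longrightarrow> 0 < R (Suc n) \<and> R (Suc n) \<le> R n" for n
    using sav_update_pos_decreasing[OF E_pos \<open>dt > 0\<close> I_nonneg _ update] by blast
  have R_bounds: "0 < R n \<and> R n \<le> R 0" for n
    by (rule pos_decreasing_seq) (use R0 E_pos step in auto)
  show ?thesis
  proof (intro allI conjI)
    fix n
    show "0 < R (Suc n)" "R (Suc n) \<le> R n" "R n \<le> R 0" "0 < \<xi> (Suc n)"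
      using step[of n] R_bounds[of n] R_bounds[of "Suc n"] E_pos[of n] xi[of n] by auto
    have "\<xi> (Suc n) \<le> R 0 / sqrt (E n)"
      using R_bounds[of "Suc n"] E_pos[of n] xi[of n] by (simp add: divide_right_mono)
    also have "\<dots> \<le> R 0 / sqrt c0"
      using R_bounds[of 0] E_ge[of n] \<open>c0 > 0\<close> by (intro divide_left_mono) auto
    finally show "\<xi> (Suc n) \<le> R 0 / sqrt c0" .
  qed
qed

end
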